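(* Let $A\in\mathbb{R}^{m\times N}$ with $N=pn$. Let $1<q_2\le q_1\le\infty$ and set $\tilde q=\frac{q_2(q_1-1)}{q_1(q_2-1)}$ (with $\tilde q=\frac{q_2}{q_2-1}$ when $q_1=\infty$). Then for any real number $s$ with $1\le s\le p^{1/\tilde q}$, $$\beta_{q_1,s}(A)\ \ge\ \beta_{q_2,s^{\tilde q}}(A)\ \ge\ s^{-\tilde q}\,\beta_{q_1,s^{\tilde q}}(A).$$
   Context: Every $\mathbf{x}\in\mathbb{R}^N$ is partitioned into $p$ consecutive blocks of length $n$: $\mathbf{x}=[\mathbf{x}_1^T,\dots,\mathbf{x}_p^T]^T$, $\mathbf{x}_i\in\mathbb{R}^n$. Mixed norms: $\lVert\mathbf{x}\rVert_{2,q}=(\sum_{i=1}^p\lVert\mathbf{x}_i\rVert_2^q)^{1/q}$ for $0<q<\infty$, $\lVert\mathbf{x}\rVert_{2,\infty}=\max_i\lVert\mathbf{x}_i\rVert_2$. For nonzero $\mathbf{x}$ and $q\in(1,\infty)$ the $q$-ratio block sparsity is $k_q(\mathbf{x})=\left(\lVert\mathbf{x}\rVert_{2,1}/\lVert\mathbf{x}\rVert_{2,q}\right)^{q/(q-1)}$, and $k_\infty(\mathbf{x})=\lVert\mathbf{x}\rVert_{2,1}/\lVert\mathbf{x}\rVert_{2,\infty}$. For $s\in[1,p]$ and $q\in(1,\infty]$, the $q$-ratio block constrained minimal singular value of $A$ is $$\beta_{q,s}(A)=\min_{\mathbf{z}\neq\mathbf{0},\ k_q(\mathbf{z})\le s}\frac{\lVert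 A\mathbf{z}\rVert_2}{\lVert\mathbf{z}\rVert_{2,q}}.$$ *)

theory Defs
  imports "HOL-Library.Extended_Real"
begin

text \<open>Vectors in R^N, N = p*n, are functions nat => real that vanish at indices >= p*n.
  Block i (i < p) consists of the entries i*n + j, j < n.  A real m x N matrix is a
  function nat => nat => real, entry A r c for r < m, c < p*n.\<close>

definition is_vec :: "nat \<Rightarrow> (nat \<Rightarrow> real) \<Rightarrow> bool" where
  "is_vec N x \<longleftrightarrow> (\<forall>i\<ge>N. x i = 0)"

definition block_norm :: "nat \<Rightarrow> (nat \<Rightarrow> real) \<Rightarrow> nat \<Rightarrow> real" where
  "block_norm n x i = sqrt (\<Sum>j<n. (x (i * n + j))\<^sup>2)"

definition mixed_norm :: "nat \<Rightarrow> nat \<Rightarrow> ereal \<Rightarrow> (nat \<Rightarrow> real) \<Rightarrow> real" where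
  "mixed_norm p n q x =
     (if q = \<infinity> then Max ((\<lambda>i. block_norm n x i) ` {..<p})
      else (\<Sum>i<p. block_norm n x i powr real_of_ereal q) powr (1 / real_of_ereal q))"

definition q_ratio_sparsity :: "nat \<Rightarrow> nat \<Rightarrow> ereal \<Rightarrow> (nat \<Rightarrow> real) \<Rightarrow> real" where
  "q_ratio_sparsity p n q x =
     (if q = \<infinity> then mixed_norm p n 1 x / mixed_norm p n \<infinity> x
      else (mixed_norm p n 1 x / mixed_norm p n q x)
             powr (real_of_ereal q / (real_of_ereal q - 1)))"

definition mat_vec_norm :: "nat \<Rightarrow> nat \<Rightarrow> (nat \<Rightarrow> nat \<Rightarrow> real) \<Rightarrow> (nat \<Rightarrow> real) \<Rightarrow> real" where
  "mat_vec_norm m N A z = sqrt (\<Sum>r<m. (\<Sum>c<N. A r c * z c)\<^sup>2)"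

text \<open>q-ratio block constrained minimal singular value (the minimum is written as an infimum;
  it is attained).\<close>
definition beta :: "nat \<Rightarrow> nat \<Rightarrow> nat \<Rightarrow> (nat \<Rightarrow> nat \<Rightarrow> real) \<Rightarrow> ereal \<Rightarrow> real \<Rightarrow> real" where
  "beta m p n A q s =
     Inf {mat_vec_norm m (p * n) A z / mixed_norm p n q z | z.
            is_vec (p * n) z \<and> z \<noteq> (\<lambda>_. 0) \<and> q_ratio_sparsity p n q z \<le> s}"

definition qtilde :: "ereal \<Rightarrow> ereal \<Rightarrow> real" where
  "qtilde q1 q2 =
     (if q1 = \<infinity> then (if q2 = \<infinity> then 1
                        else real_of_ereal q2 / (real_of_ereal q2 - 1))
      else real_of_ereal q2 * (real_of_ereal q1 - 1) /
             (real_of_ereal q1 * (real_of_ereal q2 - 1)))"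

end

theory Submission
  imports Defs "HOL-Analysis.Convex"
begin

text \<open>Everything reduces to the block norms w_i = \<parallel>z_i\<parallel>_2 of a nonzero vector z. For q2 \<le> q1:
  (1) \<parallel>z\<parallel>_{2,q1} \<le> \<parallel>z\<parallel>_{2,q2} \<le> \<parallel>z\<parallel>_{2,1};
  (2) k_q1(z) \<le> k_q2(z), because k_q(z) = \<parallel>w\<parallel>_1 / M_{q-1}, where M_r = (\<Sum>_i (w_i/\<parallel>w\<parallel>_1) w_i^r)^(1/r)
      is the power mean of w weighted by w itself, and power means increase with the order (Jensen);
  (3) k_q2(z) \<le> k_q1(z)^q~, which after unfolding k_q is just (1);
  (4) k_q(z) \<le> t with t \<ge> 1 implies \<parallel>z\<parallel>_{2,1} \<le> t \<parallel>z\<parallel>_{2,q}.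
  By (3) and (1), a vector admissible for beta_{q1,s} is admissible for beta_{q2,s^q~} with a smaller
  quotient \<parallel>Az\<parallel>_2 / \<parallel>z\<parallel>_{2,q}. By (2), (1) and (4), a vector admissible for beta_{q2,t} is
  admissible for beta_{q1,t}, and its quotient for q2 is at least 1/t times its quotient for q1.\<close>

lemma member_le_root_sum_powr:
  fixes w :: "'a \<Rightarrow> real"
  assumes "finite I" and "\<And>i. i \<in> I \<Longrightarrow> 0 \<le> w i" and "0 < r" and "i \<in> I"
  shows "w i \<le> (\<Sum>j\<in>I. w j powr r) powr (1/r)"
proof -
  have "w i powr r \<le> (\<Sum>j\<in>I. w j powr r)"
    by (rule member_le_sum) (use assms in auto)
  then have "(w i powr r) powr (1/r) \<le> (\<Sum>j\<in>I. w j powr r) powr (1/r)"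
    by (intro powr_mono2) (use assms in auto)
  moreover have "(w i powr r) powr (1/r) = w i"
    using assms by (simp add: powr_powr)
  ultimately show ?thesis by simp
qed

lemma root_sum_powr_antimono:
  fixes w :: "'a \<Rightarrow> real"
  assumes fin: "finite I" and nonneg: "\<And>i. i \<in> I \<Longrightarrow> 0 \<le> w i"
    and r1: "0 < r1" and r12: "r1 \<le> r2"
  shows "(\<Sum>i\<in>I. w i powr r2) powr (1/r2) \<le> (\<Sum>i\<in>I. w i powr r1) powr (1/r1)"
proof -
  define N where "N = (\<Sum>i\<in>I. w i powr r1) powr (1/r1)"
  have N_nonneg: "0 \<le> N" unfolding N_def by simp
  have N_powr: "N powr r1 = (\<Sum>i\<in>I. w i powr r1)"
    unfolding N_def powr_powr using r1 by (simp add: sum_nonneg)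
  have "(\<Sum>i\<in>I. w i powr r2) = (\<Sum>i\<in>I. w i powr r1 * w i powr (r2 - r1))"
    by (simp flip: powr_add)
  also have "\<dots> \<le> (\<Sum>i\<in>I. w i powr r1 * N powr (r2 - r1))"
    unfolding N_def using member_le_root_sum_powr[OF fin nonneg r1] r12 nonneg
    by (intro sum_mono mult_left_mono powr_mono2) auto
  also have "\<dots> = N powr r1 * N powr (r2 - r1)"
    by (simp add: N_powr sum_distrib_right)
  also have "\<dots> = N powr r2"
    by (simp flip: powr_add)
  finally have "(\<Sum>i\<in>I. w i powr r2) powr (1/r2) \<le> (N powr r2) powr (1/r2)"
    by (intro powr_mono2) (use r1 r12 in \<open>auto intro: sum_nonneg\<close>)
  also have "\<dots> = N" using r1 r12 N_nonneg by (simp add: powr_powr)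
  finally show ?thesis unfolding N_def .
qed

lemma mult_powr_eq_powr_add_one:
  fixes x r :: real
  assumes "0 \<le> x"
  shows "x * x powr r = x powr (r + 1)"
  using assms by (simp add: powr_add)

definition self_weighted_power_mean :: "('a \<Rightarrow> real) \<Rightarrow> 'a set \<Rightarrow> real \<Rightarrow> real" where
  "self_weighted_power_mean w I r = ((\<Sum>i\<in>I. w i powr (r + 1)) / (\<Sum>i\<in>I. w i)) powr (1 / r)"

lemma self_weighted_power_mean_mono_pos:
  fixes w :: "'a \<Rightarrow> real"
  assumes fin: "finite I" and "I \<noteq> {}" and pos: "\<And>i. i \<in> I \<Longrightarrow> 0 < w i"
    and r1: "0 < r1" and r12: "r1 \<le> r2"
  shows "self_weighted_power_mean w I r1 \<le> self_weighted_power_mean w I r2"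
proof -
  define a where "a = (\<Sum>i\<in>I. w i)"
  define \<rho> where "\<rho> = r2 / r1"
  have a_pos: "0 < a" unfolding a_def using assms by (intro sum_pos) auto
  have mean_eq: "(\<Sum>i\<in>I. (w i / a) * w i powr r) = (\<Sum>i\<in>I. w i powr (r + 1)) / a" for r
    using pos by (simp add: sum_divide_distrib mult_powr_eq_powr_add_one less_imp_le)
  have "(\<lambda>y. y powr \<rho>) (\<Sum>i\<in>I. (w i / a) *\<^sub>R w i powr r1)
      \<le> (\<Sum>i\<in>I. (w i / a) * (\<lambda>y. y powr \<rho>) (w i powr r1))"
  proof (rule convex_on_sum[OF fin \<open>I \<noteq> {}\<close> powr_convex])
    show "1 \<le> \<rho>" unfolding \<rho>_def using r1 r12 by simp
    show "(\<Sum>i\<in>I. w i / a) = 1" using a_pos by (simp add: a_def flip: sum_divide_distrib)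
    show "0 \<le> w i / a" if "i \<in> I" for i using pos[OF that] a_pos by simp
    show "w i powr r1 \<in> {0<..}" if "i \<in> I" for i using pos[OF that] by simp
  qed
  also have "(\<Sum>i\<in>I. (w i / a) * (w i powr r1) powr \<rho>) = (\<Sum>i\<in>I. (w i / a) * w i powr r2)"
    using r1 by (simp add: powr_powr \<rho>_def)
  finally have "((\<Sum>i\<in>I. w i powr (r1 + 1)) / a) powr \<rho> \<le> (\<Sum>i\<in>I. w i powr (r2 + 1)) / a"
    by (simp only: real_scaleR_def mean_eq)
  then have "(((\<Sum>i\<in>I. w i powr (r1 + 1)) / a) powr \<rho>) powr (1 / r2)
      \<le> ((\<Sum>i\<in>I. w i powr (r2 + 1)) / a) powr (1 / r2)"
    by (intro powr_mono2) (use r1 r12 in auto)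
  moreover have "\<rho> * (1 / r2) = 1 / r1" unfolding \<rho>_def using r1 r12 by simp
  ultimately show ?thesis unfolding self_weighted_power_mean_def a_def[symmetric] by (simp add: powr_powr)
qed

lemma self_weighted_power_mean_mono:
  fixes w :: "'a \<Rightarrow> real"
  assumes fin: "finite I" and nonneg: "\<And>i. i \<in> I \<Longrightarrow> 0 \<le> w i" and "0 < (\<Sum>i\<in>I. w i)"
    and "0 < r1" and "r1 \<le> r2"
  shows "self_weighted_power_mean w I r1 \<le> self_weighted_power_mean w I r2"
proof -
  define J where "J = {i\<in>I. 0 < w i}"
  have "finite J" "J \<subseteq> I" using fin unfolding J_def by auto
  have restrict: "sum f I = sum f J" if "\<And>i. i \<in> I - J \<Longrightarrow> f i = 0" for f :: "'a \<Rightarrow> real"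
    by (rule sum.mono_neutral_right) (use fin \<open>J \<subseteq> I\<close> that in auto)
  have zero: "w i = 0" if "i \<in> I - J" for i using that nonneg unfolding J_def by force
  have sum_eq: "(\<Sum>i\<in>I. w i) = (\<Sum>i\<in>J. w i)"
    by (rule restrict) (simp add: zero)
  have "(\<Sum>i\<in>I. w i powr (r + 1)) = (\<Sum>i\<in>J. w i powr (r + 1))" for r
    by (rule restrict) (simp add: zero)
  then have mean_eq: "self_weighted_power_mean w I r = self_weighted_power_mean w J r" for r
    unfolding self_weighted_power_mean_def sum_eq by simp
  have "J \<noteq> {}" using \<open>0 < (\<Sum>i\<in>I. w i)\<close> sum_eq by auto
  from self_weighted_power_mean_mono_pos[OF \<open>finite J\<close> this _ assms(4,5), of w]
  show ?thesis unfolding mean_eq J_def by simp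
qed

lemma self_weighted_power_mean_le_bound:
  fixes w :: "'a \<Rightarrow> real"
  assumes "finite I" and nonneg: "\<And>i. i \<in> I \<Longrightarrow> 0 \<le> w i" and a_pos: "0 < (\<Sum>i\<in>I. w i)"
    and bound: "\<And>i. i \<in> I \<Longrightarrow> w i \<le> M" and r: "0 < r"
  shows "self_weighted_power_mean w I r \<le> M"
proof -
  define a where "a = (\<Sum>i\<in>I. w i)"
  have "I \<noteq> {}" using a_pos by auto
  then obtain i where "i \<in> I" by blast
  then have M_nonneg: "0 \<le> M" using nonneg bound by (meson order.trans)
  have "(\<Sum>i\<in>I. w i powr (r + 1)) = (\<Sum>i\<in>I. w i * w i powr r)"
    using nonneg by (simp add: mult_powr_eq_powr_add_one)
  also have "\<dots> \<le> (\<Sum>i\<in>I. w i * M powr r)"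
    by (intro sum_mono mult_left_mono powr_mono2) (use r nonneg bound in auto)
  also have "\<dots> = a * M powr r" by (simp add: a_def sum_distrib_right)
  finally have "(\<Sum>i\<in>I. w i powr (r + 1)) / a \<le> M powr r"
    using a_pos unfolding a_def by (simp add: divide_le_eq mult.commute)
  then have "((\<Sum>i\<in>I. w i powr (r + 1)) / a) powr (1 / r) \<le> (M powr r) powr (1 / r)"
    using r a_pos nonneg
    by (intro powr_mono2) (auto simp: a_def intro!: sum_nonneg divide_nonneg_nonneg)
  also have "\<dots> = M" using r M_nonneg by (simp add: powr_powr)
  finally show ?thesis unfolding self_weighted_power_mean_def a_def .
qed

lemma block_norm_nonneg: "0 \<le> block_norm n z i"
  unfolding block_norm_def by (simp add: sum_nonneg)

lemma mixed_norm_one: "mixed_norm p n 1 z = (\<Sum>i<p. block_norm n z i)"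
  unfolding mixed_norm_def by (simp add: sum_nonneg block_norm_nonneg)

lemma mixed_norm_ereal: "mixed_norm p n (ereal r) z = (\<Sum>i<p. block_norm n z i powr r) powr (1/r)"
  unfolding mixed_norm_def by simp

lemma mixed_norm_PInf: "mixed_norm p n \<infinity> z = Max (block_norm n z ` {..<p})"
  unfolding mixed_norm_def by simp

lemma mat_vec_norm_nonneg: "0 \<le> mat_vec_norm m N A z"
  unfolding mat_vec_norm_def by (simp add: sum_nonneg)

lemma q_ratio_sparsity_ereal:
  "q_ratio_sparsity p n (ereal r) z =
     ((\<Sum>i<p. block_norm n z i) / mixed_norm p n (ereal r) z) powr (r/(r-1))"
  unfolding q_ratio_sparsity_def by (simp add: mixed_norm_one)

lemma q_ratio_sparsity_PInf:
  "q_ratio_sparsity p n \<infinity> z = (\<Sum>i<p. block_norm n z i) / Max (block_norm n z ` {..<p})"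
  unfolding q_ratio_sparsity_def by (simp add: mixed_norm_one mixed_norm_PInf)

lemma ex_block_norm_pos:
  assumes "0 < n" and "is_vec (p * n) z" and "z \<noteq> (\<lambda>_. 0)"
  shows "\<exists>i<p. 0 < block_norm n z i"
proof -
  obtain c where c: "z c \<noteq> 0" using assms(3) by auto
  then have "c < p * n" using assms(2) unfolding is_vec_def by (meson not_le)
  then have "c div n < p" by (simp add: less_mult_imp_div_less)
  have "0 < (z (c div n * n + c mod n))\<^sup>2" using c by simp
  also have "\<dots> \<le> (\<Sum>j<n. (z (c div n * n + j))\<^sup>2)"
    by (rule member_le_sum) (use assms(1) in auto)
  finally show ?thesis unfolding block_norm_def using \<open>c div n < p\<close> by auto
qed

context
  fixes p n :: nat and z :: "nat \<Rightarrow> real" and i0 :: nat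
  assumes i0: "i0 < p" and block_pos: "0 < block_norm n z i0"
begin

private abbreviation "w \<equiv> block_norm n z"

lemma sum_block_norm_pos: "0 < (\<Sum>i<p. w i)"
proof -
  have "w i0 \<le> (\<Sum>i<p. w i)" by (rule member_le_sum) (use i0 block_norm_nonneg in auto)
  with block_pos show ?thesis by simp
qed

lemma sum_block_norm_powr_pos: "0 < (\<Sum>i<p. w i powr r)"
proof -
  have "w i0 powr r \<le> (\<Sum>i<p. w i powr r)" by (rule member_le_sum) (use i0 in auto)
  moreover have "0 < w i0 powr r" using block_pos by simp
  ultimately show ?thesis by linarith
qed

lemma Max_block_norm_pos: "0 < Max (w ` {..<p})"
proof -
  have "w i0 \<le> Max (w ` {..<p})" by (rule Max_ge) (use i0 in auto)
  with block_pos show ?thesis by simp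
qed

lemma mixed_norm_pos: "0 < mixed_norm p n q z"
  using Max_block_norm_pos sum_block_norm_powr_pos[of "real_of_ereal q"] unfolding mixed_norm_def
  by auto

lemma mixed_norm_antimono:
  assumes "1 \<le> q2" and "q2 \<le> q1"
  shows "mixed_norm p n q1 z \<le> mixed_norm p n q2 z"
proof (cases q2)
  case (real r2)
  show ?thesis
  proof (cases q1)
    case (real r1)
    then show ?thesis
      using assms \<open>q2 = ereal r2\<close>
      by (simp add: mixed_norm_ereal root_sum_powr_antimono block_norm_nonneg)
  next
    case PInf
    have "Max (w ` {..<p}) \<le> (\<Sum>i<p. w i powr r2) powr (1/r2)"
      using i0 assms real
      by (subst Max_le_iff) (auto intro!: member_le_root_sum_powr simp: block_norm_nonneg)
    then show ?thesis using PInf real by (simp add: mixed_norm_ereal mixed_norm_PInf)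
  qed (use assms in simp)
qed (use assms in simp_all)

lemma q_ratio_sparsity_ereal_eq_self_weighted_power_mean:
  assumes "1 < r"
  shows "q_ratio_sparsity p n (ereal r) z = (\<Sum>i<p. w i) / self_weighted_power_mean w {..<p} (r - 1)"
proof (rule ln_inj_iff[THEN iffD1])
  have a: "0 < (\<Sum>i<p. w i)" and S: "0 < (\<Sum>i<p. w i powr r)"
    using sum_block_norm_pos sum_block_norm_powr_pos .
  then show "0 < q_ratio_sparsity p n (ereal r) z"
    and "0 < (\<Sum>i<p. w i) / self_weighted_power_mean w {..<p} (r - 1)"
    by (simp_all add: q_ratio_sparsity_ereal mixed_norm_ereal self_weighted_power_mean_def)
  show "ln (q_ratio_sparsity p n (ereal r) z)
      = ln ((\<Sum>i<p. w i) / self_weighted_power_mean w {..<p} (r - 1))"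
    using assms a S
    by (simp add: q_ratio_sparsity_ereal mixed_norm_ereal self_weighted_power_mean_def ln_div field_simps)
qed

lemma q_ratio_sparsity_nonneg: "0 \<le> q_ratio_sparsity p n q z"
  using sum_block_norm_pos Max_block_norm_pos
  unfolding q_ratio_sparsity_def by (simp add: mixed_norm_one mixed_norm_PInf)

lemma self_weighted_power_mean_block_norm_pos: "0 < self_weighted_power_mean w {..<p} r"
  unfolding self_weighted_power_mean_def
  using sum_block_norm_pos sum_block_norm_powr_pos[of "r + 1"] by auto

lemma q_ratio_sparsity_antimono:
  assumes "1 < q2" and "q2 \<le> q1"
  shows "q_ratio_sparsity p n q1 z \<le> q_ratio_sparsity p n q2 z"
proof (cases q2)
  case (real r2)
  have r2: "1 < r2" using assms real by simp
  let ?M2 = "self_weighted_power_mean w {..<p} (r2 - 1)"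
  have "?M2 \<le> self_weighted_power_mean w {..<p} (r1 - 1)" if "r2 \<le> r1" for r1
    using r2 that sum_block_norm_pos block_norm_nonneg by (intro self_weighted_power_mean_mono) auto
  moreover have "?M2 \<le> Max (w ` {..<p})"
    using r2 sum_block_norm_pos block_norm_nonneg by (intro self_weighted_power_mean_le_bound) auto
  ultimately show ?thesis
    using assms real r2 sum_block_norm_pos Max_block_norm_pos self_weighted_power_mean_block_norm_pos
    by (cases q1) (auto simp: q_ratio_sparsity_ereal_eq_self_weighted_power_mean
        q_ratio_sparsity_PInf intro!: divide_left_mono mult_pos_pos)
qed (use assms in simp_all)

lemma q_ratio_sparsity_le_powr_qtilde:
  assumes "1 < q2" and "q2 \<le> q1"
  shows "q_ratio_sparsity p n q2 z \<le> q_ratio_sparsity p n q1 z powr qtilde q1 q2"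
proof (cases q2)
  case (real r2)
  have r2: "1 < r2" using assms real by simp
  have k2: "q_ratio_sparsity p n q2 z = ((\<Sum>i<p. w i) / mixed_norm p n q2 z) powr (r2/(r2-1))"
    using real by (simp add: q_ratio_sparsity_ereal)
  \<comment> \<open>q~ is exactly the exponent that turns the outer exponent q1/(q1-1) of k_q1 into q2/(q2-1)\<close>
  have k1: "q_ratio_sparsity p n q1 z powr qtilde q1 q2
      = ((\<Sum>i<p. w i) / mixed_norm p n q1 z) powr (r2/(r2-1))"
  proof (cases q1)
    case (real r1)
    have "r1/(r1-1) * (r2 * (r1 - 1) / (r1 * (r2 - 1))) = r2/(r2-1)"
      using assms real \<open>q2 = ereal r2\<close> by (simp add: divide_simps)
    then show ?thesis
      using real \<open>q2 = ereal r2\<close> by (simp add: q_ratio_sparsity_ereal qtilde_def powr_powr)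
  next
    case PInf
    then show ?thesis using real by (simp add: q_ratio_sparsity_PInf mixed_norm_PInf qtilde_def)
  qed (use assms in simp)
  show ?thesis
    unfolding k1 k2
    using r2 sum_block_norm_pos mixed_norm_pos[of q1] mixed_norm_pos[of q2] mixed_norm_antimono assms
    by (intro powr_mono2 divide_left_mono) auto
next
  case PInf
  then show ?thesis using assms by (simp add: qtilde_def)
qed (use assms in simp)

lemma sum_block_norm_le_mult_mixed_norm:
  assumes "1 < q" and "q_ratio_sparsity p n q z \<le> t" and "1 \<le> t"
  shows "(\<Sum>i<p. w i) \<le> t * mixed_norm p n q z"
proof -
  have "(\<Sum>i<p. w i) / mixed_norm p n q z \<le> t"
  proof (cases q)
    case (real r)
    have r: "1 < r" using assms real by simp
    define ratio where "ratio = (\<Sum>i<p. w i) / mixed_norm p n q z"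
    have "0 < ratio" unfolding ratio_def using sum_block_norm_pos mixed_norm_pos[of q] by simp
    then have "ratio = (ratio powr (r/(r-1))) powr ((r-1)/r)"
      using r by (simp add: powr_powr)
    also have "\<dots> \<le> t powr ((r-1)/r)"
      using assms r unfolding real ratio_def by (intro powr_mono2) (auto simp: q_ratio_sparsity_ereal)
    also have "\<dots> \<le> t"
      using powr_mono[of "(r-1)/r" 1 t] r assms by simp
    finally show ?thesis unfolding ratio_def .
  qed (use assms in \<open>simp_all add: q_ratio_sparsity_PInf mixed_norm_PInf\<close>)
  then show ?thesis using mixed_norm_pos by (simp add: divide_le_eq mult.commute)
qed

end

lemma qtilde_pos:
  assumes "1 < q2" and "q2 \<le> q1"
  shows "0 < qtilde q1 q2"
proof (cases q2)
  case (real r2)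
  then show ?thesis using assms
    by (cases q1) (auto simp: qtilde_def intro!: divide_pos_pos mult_pos_pos)
qed (use assms in \<open>auto simp: qtilde_def\<close>)

definition admissible :: "nat \<Rightarrow> nat \<Rightarrow> ereal \<Rightarrow> real \<Rightarrow> (nat \<Rightarrow> real) \<Rightarrow> bool" where
  "admissible p n q s z \<longleftrightarrow>
     is_vec (p * n) z \<and> z \<noteq> (\<lambda>_. 0) \<and> q_ratio_sparsity p n q z \<le> s"

lemma admissible_block_norm_pos:
  assumes "0 < n" and "admissible p n q s z"
  obtains i0 where "i0 < p" and "0 < block_norm n z i0"
  using ex_block_norm_pos assms unfolding admissible_def by blast

lemma beta_eq_INF:
  "beta m p n A q s
     = (INF z \<in> Collect (admissible p n q s). mat_vec_norm m (p * n) A z / mixed_norm p n q z)"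
  unfolding beta_def admissible_def by (simp add: setcompr_eq_image)

lemma beta_le:
  assumes "0 < n" and "admissible p n q s z"
  shows "beta m p n A q s \<le> mat_vec_norm m (p * n) A z / mixed_norm p n q z"
  unfolding beta_eq_INF
proof (rule cINF_lower)
  have "0 \<le> mat_vec_norm m (p * n) A y / mixed_norm p n q y" if y: "admissible p n q s y" for y
  proof -
    obtain i0 where "i0 < p" and "0 < block_norm n y i0"
      using admissible_block_norm_pos[OF \<open>0 < n\<close> y] .
    then show ?thesis using mixed_norm_pos[of i0 p n y q] mat_vec_norm_nonneg by simp
  qed
  then show "bdd_below ((\<lambda>y. mat_vec_norm m (p * n) A y / mixed_norm p n q y)
      ` Collect (admissible p n q s))"
    by (intro bdd_belowI2[of _ 0]) auto
qed (use assms in simp)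

lemma le_beta:
  assumes "Collect (admissible p n q s) \<noteq> {}"
    and "\<And>z. admissible p n q s z \<Longrightarrow> c \<le> mat_vec_norm m (p * n) A z / mixed_norm p n q z"
  shows "c \<le> beta m p n A q s"
  unfolding beta_eq_INF using assms by (rule cINF_greatest) simp

lemma admissible_first_unit_vector:
  assumes "0 < n" and "0 < p" and "1 < q" and "1 \<le> s"
  shows "admissible p n q s (\<lambda>c. if c = 0 then 1 else 0)"
proof -
  define e :: "nat \<Rightarrow> real" where "e = (\<lambda>c. if c = 0 then 1 else 0)"
  have block_e: "block_norm n e i = (if i = 0 then 1 else 0)" for i
  proof -
    have "(\<Sum>j<n. (e (i * n + j))\<^sup>2) = (\<Sum>j<n. if i = 0 \<and> j = 0 then 1 else 0)"
      by (intro sum.cong) (auto simp: e_def)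
    also have "\<dots> = (if i = 0 then 1 else 0)"
      using assms(1) by (cases "i = 0") simp_all
    finally show ?thesis unfolding block_norm_def by simp
  qed
  have "block_norm n e i powr r = block_norm n e i" for i r
    by (simp add: block_e)
  moreover have "(\<Sum>i<p. block_norm n e i) = 1"
    using assms(2) by (simp add: block_e)
  moreover have "Max (block_norm n e ` {..<p}) = 1"
    using assms(2) by (intro Max_eqI) (auto simp: block_e)
  ultimately have "q_ratio_sparsity p n q e = 1"
    using assms(3) by (cases q) (simp_all add: q_ratio_sparsity_ereal q_ratio_sparsity_PInf mixed_norm_ereal)
  then show ?thesis
    using assms unfolding admissible_def is_vec_def e_def by (auto simp: fun_eq_iff)
qed

lemma beta_powr_qtilde_le:
  assumes "0 < n" and "0 < p" and "1 < q2" and "q2 \<le> q1" and "1 \<le> s"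
  shows "beta m p n A q2 (s powr qtilde q1 q2) \<le> beta m p n A q1 s"
proof (rule le_beta)
  show "Collect (admissible p n q1 s) \<noteq> {}"
    using admissible_first_unit_vector[OF assms(1,2) less_le_trans[OF assms(3,4)] assms(5)] by auto
  fix z assume z: "admissible p n q1 s z"
  then obtain i0 where i0: "i0 < p" "0 < block_norm n z i0"
    using admissible_block_norm_pos \<open>0 < n\<close> by blast
  have "q_ratio_sparsity p n q2 z \<le> q_ratio_sparsity p n q1 z powr qtilde q1 q2"
    using q_ratio_sparsity_le_powr_qtilde[OF i0 assms(3,4)] .
  also have "\<dots> \<le> s powr qtilde q1 q2"
    using z qtilde_pos[OF assms(3,4)] q_ratio_sparsity_nonneg[OF i0]
    unfolding admissible_def by (intro powr_mono2) auto
  finally have "admissible p n q2 (s powr qtilde q1 q2) z"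
    using z unfolding admissible_def by simp
  then have "beta m p n A q2 (s powr qtilde q1 q2) \<le> mat_vec_norm m (p * n) A z / mixed_norm p n q2 z"
    by (rule beta_le[OF \<open>0 < n\<close>])
  also have "\<dots> \<le> mat_vec_norm m (p * n) A z / mixed_norm p n q1 z"
    using mixed_norm_antimono[OF i0, of q2 q1] mixed_norm_pos[OF i0] assms
    by (intro divide_left_mono) (auto simp: mat_vec_norm_nonneg)
  finally show "beta m p n A q2 (s powr qtilde q1 q2) \<le> \<dots>" .
qed

lemma beta_div_le_beta_smaller_exponent:
  assumes "0 < n" and "0 < p" and "1 < q2" and "q2 \<le> q1" and "1 \<le> t"
  shows "beta m p n A q1 t / t \<le> beta m p n A q2 t"
proof (rule le_beta)
  show "Collect (admissible p n q2 t) \<noteq> {}"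
    using admissible_first_unit_vector[OF assms(1,2,3,5)] by auto
  fix z assume z: "admissible p n q2 t z"
  then obtain i0 where i0: "i0 < p" "0 < block_norm n z i0"
    using admissible_block_norm_pos \<open>0 < n\<close> by blast
  have z1: "admissible p n q1 t z"
    using z q_ratio_sparsity_antimono[OF i0 assms(3,4)] unfolding admissible_def by simp
  have "1 < q1" using assms(3,4) by simp
  have "mixed_norm p n q2 z \<le> mixed_norm p n 1 z"
    using mixed_norm_antimono[OF i0] assms(3) by simp
  also have "\<dots> \<le> t * mixed_norm p n q1 z"
    unfolding mixed_norm_one
    by (rule sum_block_norm_le_mult_mixed_norm[OF i0 \<open>1 < q1\<close> _ \<open>1 \<le> t\<close>])
      (use z1 in \<open>simp add: admissible_def\<close>)
  finally have norm_le: "mixed_norm p n q2 z \<le> t * mixed_norm p n q1 z" .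
  have "beta m p n A q1 t / t \<le> mat_vec_norm m (p * n) A z / mixed_norm p n q1 z / t"
    by (intro divide_right_mono beta_le[OF \<open>0 < n\<close> z1]) (use \<open>1 \<le> t\<close> in simp)
  also have "\<dots> = mat_vec_norm m (p * n) A z / (t * mixed_norm p n q1 z)"
    by (simp add: mult.commute)
  also have "\<dots> \<le> mat_vec_norm m (p * n) A z / mixed_norm p n q2 z"
    using norm_le mixed_norm_pos[OF i0, of q1] mixed_norm_pos[OF i0, of q2] \<open>1 \<le> t\<close>
    by (intro divide_left_mono mat_vec_norm_nonneg) auto
  finally show "beta m p n A q1 t / t \<le> \<dots>" .
qed

theorem proposition2:
  fixes m p n :: nat and A :: "nat \<Rightarrow> nat \<Rightarrow> real" and q1 q2 :: ereal and s :: real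
  assumes "0 < n"
    and "1 < q2" and "q2 \<le> q1"
    and "1 \<le> s" and "s \<le> real p powr (1 / qtilde q1 q2)"
  shows "beta m p n A q1 s \<ge> beta m p n A q2 (s powr qtilde q1 q2)
       \<and> beta m p n A q2 (s powr qtilde q1 q2)
           \<ge> s powr (- qtilde q1 q2) * beta m p n A q1 (s powr qtilde q1 q2)"
proof -
  define t where "t = s powr qtilde q1 q2"
  \<comment> \<open>the upper bound on s is needed only to exclude p = 0\<close>
  have "0 < p" using assms(4,5) by (cases p) auto
  have "1 \<le> t" unfolding t_def using assms(4) qtilde_pos[OF assms(2,3)] by (simp add: ge_one_powr_ge_zero)
  moreover have "s powr (- qtilde q1 q2) = 1 / t" unfolding t_def by (simp add: powr_minus_divide)
  ultimately show ?thesis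
    using beta_powr_qtilde_le[OF assms(1) \<open>0 < p\<close> assms(2,3,4)]
      beta_div_le_beta_smaller_exponent[OF assms(1) \<open>0 < p\<close> assms(2,3), of t]
    unfolding t_def by simp
qed

end
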